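(* Let $S$ be a skew lattice that is a strong distributive solution of the Yang–Baxter equation. Then (i) the lattice $S/\mathcal{D}$ is also a strong distributive solution, and (ii) $S$ is quasi-distributive, i.e. $S/\mathcal{D}$ is a distributive lattice.
   Context: A skew lattice is a set $S$ with two binary operations $\wedge,\vee$, each idempotent and associative, satisfying the absorption laws $x\wedge(x\vee y)=x=x\vee(x\wedge y)$ and $(x\wedge y)\vee y=y=(x\vee y)\wedge y$ for all $x,y\in S$. On a skew lattice, $x\,\mathcal{D}\,y$ means $x\wedge y\wedge x=x$ and $y\wedge x\wedge y=y$; $\mathcal{D}$ is a congruence and $S/\mathcal{D}$ is a lattice (the maximal lattice image). A map $r:X\times X\to X\times X$ is a set-theoretic solution of the Yang–Baxter equation if $(r\times\mathrm{id})\circ(\mathrm{id}\times r)\circ(r\times\mathrm{id})=(\mathrm{id}\times r)\circ(r\times\mathrm{id})\circ(\mathrm{id}\times r)$. A skew lattice $S$ is a strong distributive solution if the map $r(x,y)=(x\wedge y,x\vee y)$ on $S\times S$ is a set-theoretic solution of the Yang–Baxter equation. *)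

theory Defs
  imports Main
begin

definition skew_lattice :: "'a set \<Rightarrow> ('a \<Rightarrow> 'a \<Rightarrow> 'a) \<Rightarrow> ('a \<Rightarrow> 'a \<Rightarrow> 'a) \<Rightarrow> bool" where
  "skew_lattice S m j \<longleftrightarrow>
     (\<forall>x\<in>S. \<forall>y\<in>S. m x y \<in> S \<and> j x y \<in> S) \<and>
     (\<forall>x\<in>S. m x x = x \<and> j x x = x) \<and>
     (\<forall>x\<in>S. \<forall>y\<in>S. \<forall>z\<in>S. m (m x y) z = m x (m y z) \<and> j (j x y) z = j x (j y z)) \<and>
     (\<forall>x\<in>S. \<forall>y\<in>S. m x (j x y) = x \<and> j x (m x y) = x \<and>
                       j (m x y) y = y \<and> m (j x y) y = y)"

definition r12 :: "('a \<times> 'a \<Rightarrow> 'a \<times> 'a) \<Rightarrow> 'a \<times> 'a \<times> 'a \<Rightarrow> 'a \<times> 'a \<times> 'a" where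
  "r12 r t = (case t of (x, y, z) \<Rightarrow> (fst (r (x, y)), snd (r (x, y)), z))"

definition r23 :: "('a \<times> 'a \<Rightarrow> 'a \<times> 'a) \<Rightarrow> 'a \<times> 'a \<times> 'a \<Rightarrow> 'a \<times> 'a \<times> 'a" where
  "r23 r t = (case t of (x, y, z) \<Rightarrow> (x, fst (r (y, z)), snd (r (y, z))))"

definition YB_solution :: "'a set \<Rightarrow> ('a \<times> 'a \<Rightarrow> 'a \<times> 'a) \<Rightarrow> bool" where
  "YB_solution X r \<longleftrightarrow>
     (\<forall>x\<in>X. \<forall>y\<in>X. r (x, y) \<in> X \<times> X) \<and>
     (\<forall>x\<in>X. \<forall>y\<in>X. \<forall>z\<in>X.
        r12 r (r23 r (r12 r (x, y, z))) = r23 r (r12 r (r23 r (x, y, z))))"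

definition strong_distributive_solution ::
  "'a set \<Rightarrow> ('a \<Rightarrow> 'a \<Rightarrow> 'a) \<Rightarrow> ('a \<Rightarrow> 'a \<Rightarrow> 'a) \<Rightarrow> bool" where
  "strong_distributive_solution S m j \<longleftrightarrow>
     skew_lattice S m j \<and> YB_solution S (\<lambda>(x, y). (m x y, j x y))"

definition Drel :: "'a set \<Rightarrow> ('a \<Rightarrow> 'a \<Rightarrow> 'a) \<Rightarrow> ('a \<times> 'a) set" where
  "Drel S m = {(x, y). x \<in> S \<and> y \<in> S \<and> m (m x y) x = x \<and> m (m y x) y = y}"

text \<open>Quotient S/D with the induced operations (well defined since D is a congruence).\<close>
definition quot_op :: "'a set \<Rightarrow> ('a \<Rightarrow> 'a \<Rightarrow> 'a) \<Rightarrow> ('a \<Rightarrow> 'a \<Rightarrow> 'a)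
                       \<Rightarrow> 'a set \<Rightarrow> 'a set \<Rightarrow> 'a set" where
  "quot_op S m f A B = Drel S m `` {f (SOME a. a \<in> A) (SOME b. b \<in> B)}"

definition distributive_lattice ::
  "'a set \<Rightarrow> ('a \<Rightarrow> 'a \<Rightarrow> 'a) \<Rightarrow> ('a \<Rightarrow> 'a \<Rightarrow> 'a) \<Rightarrow> bool" where
  "distributive_lattice L m j \<longleftrightarrow>
     skew_lattice L m j \<and>
     (\<forall>x\<in>L. \<forall>y\<in>L. m x y = m y x \<and> j x y = j y x) \<and>
     (\<forall>x\<in>L. \<forall>y\<in>L. \<forall>z\<in>L. m x (j y z) = j (m x y) (m x z) \<and> j x (m y z) = m (j x y) (j x z))"

end

theory Submission
  imports Defs
begin

text \<open>Both operations of a skew lattice are bands, and in any band Green's relation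
  \<open>x\<cdot>y\<cdot>x = x \<and> y\<cdot>x\<cdot>y = y\<close> is a congruence whose quotient is a semilattice; by absorption
  the relations of the two bands coincide, so \<open>S/\<D>\<close> is a lattice and the class map is a
  homomorphism. The Yang--Baxter equation for \<open>(x,y) \<mapsto> (x\<and>y, x\<or>y)\<close> amounts to three identities
  in \<open>S\<close>, which therefore hold in \<open>S/\<D>\<close> as well. Specialising the middle identity yields the
  left distributive law \<open>x\<and>(y\<or>z) = (x\<and>y)\<or>(x\<and>z)\<close> in \<open>S\<close>, hence in the lattice \<open>S/\<D>\<close>,
  where it implies the dual law.\<close>

locale band =
  fixes S :: "'a set" and f :: "'a \<Rightarrow> 'a \<Rightarrow> 'a" (infixr "\<cdot>" 70)
  assumes closed[simp]: "x \<in> S \<Longrightarrow> y \<in> S \<Longrightarrow> x \<cdot> y \<in> S"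
    and idem[simp]: "x \<in> S \<Longrightarrow> x \<cdot> x = x"
    and assoc[simp]: "x \<in> S \<Longrightarrow> y \<in> S \<Longrightarrow> z \<in> S \<Longrightarrow> (x \<cdot> y) \<cdot> z = x \<cdot> y \<cdot> z"
begin

text \<open>Instances of idempotence for products, stated right-associated so that they still
  apply after the simplifier has normalised with \<open>assoc\<close>.\<close>

lemma idem_left[simp]: "x \<in> S \<Longrightarrow> y \<in> S \<Longrightarrow> x \<cdot> x \<cdot> y = x \<cdot> y"
  by (metis assoc idem)

lemma idem2: "a \<in> S \<Longrightarrow> b \<in> S \<Longrightarrow> a \<cdot> b \<cdot> a \<cdot> b = a \<cdot> b"
  using idem[of "a \<cdot> b"] by (simp only: assoc closed)

lemma idem2_left: "a \<in> S \<Longrightarrow> b \<in> S \<Longrightarrow> r \<in> S \<Longrightarrow> a \<cdot> b \<cdot> a \<cdot> b \<cdot> r = a \<cdot> b \<cdot> r"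
  using idem_left[of "a \<cdot> b" r] by (simp only: assoc closed)

lemma idem3: "a \<in> S \<Longrightarrow> b \<in> S \<Longrightarrow> c \<in> S \<Longrightarrow> a \<cdot> b \<cdot> c \<cdot> a \<cdot> b \<cdot> c = a \<cdot> b \<cdot> c"
  using idem[of "a \<cdot> b \<cdot> c"] by (simp only: assoc closed)

lemma idem3_left:
  "a \<in> S \<Longrightarrow> b \<in> S \<Longrightarrow> c \<in> S \<Longrightarrow> r \<in> S \<Longrightarrow> a \<cdot> b \<cdot> c \<cdot> a \<cdot> b \<cdot> c \<cdot> r = a \<cdot> b \<cdot> c \<cdot> r"
  using idem_left[of "a \<cdot> b \<cdot> c" r] by (simp only: assoc closed)

lemma idem4: "a \<in> S \<Longrightarrow> b \<in> S \<Longrightarrow> c \<in> S \<Longrightarrow> d \<in> S \<Longrightarrow>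
    a \<cdot> b \<cdot> c \<cdot> d \<cdot> a \<cdot> b \<cdot> c \<cdot> d = a \<cdot> b \<cdot> c \<cdot> d"
  using idem[of "a \<cdot> b \<cdot> c \<cdot> d"] by (simp only: assoc closed)

lemma idem4_left: "a \<in> S \<Longrightarrow> b \<in> S \<Longrightarrow> c \<in> S \<Longrightarrow> d \<in> S \<Longrightarrow> r \<in> S \<Longrightarrow>
    a \<cdot> b \<cdot> c \<cdot> d \<cdot> a \<cdot> b \<cdot> c \<cdot> d \<cdot> r = a \<cdot> b \<cdot> c \<cdot> d \<cdot> r"
  using idem_left[of "a \<cdot> b \<cdot> c \<cdot> d" r] by (simp only: assoc closed)

lemma sandwich_left:
  "a \<in> S \<Longrightarrow> b \<in> S \<Longrightarrow> r \<in> S \<Longrightarrow> a \<cdot> b \<cdot> a = a \<Longrightarrow> a \<cdot> b \<cdot> a \<cdot> r = a \<cdot> r"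
  by (metis assoc closed)

lemma sandwich_trans:
  assumes x: "x \<in> S" and y: "y \<in> S" and w: "w \<in> S"
    and xy: "x \<cdot> y \<cdot> x = x" and yw: "y \<cdot> w \<cdot> y = y"
  shows "x \<cdot> w \<cdot> x = x"
proof -
  note hx = sandwich_left[OF x y _ xy] and hy = sandwich_left[OF y w _ yw]
  have "x \<cdot> w \<cdot> x = x \<cdot> y \<cdot> x \<cdot> w \<cdot> x" by (simp add: x y w hx)
  also have "\<dots> = x \<cdot> y \<cdot> w \<cdot> y \<cdot> x \<cdot> w \<cdot> x" by (simp add: x y w hy)
  also have "\<dots> = x \<cdot> y \<cdot> w \<cdot> x \<cdot> y \<cdot> w \<cdot> y \<cdot> x \<cdot> w \<cdot> x"
    using idem3_left[of x y w "y \<cdot> x \<cdot> w \<cdot> x"] by (simp add: x y w)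
  also have "\<dots> = x \<cdot> y \<cdot> w \<cdot> x \<cdot> y \<cdot> x \<cdot> w \<cdot> x" by (simp add: x y w hy)
  also have "\<dots> = x \<cdot> y \<cdot> w \<cdot> x \<cdot> y \<cdot> x \<cdot> w \<cdot> x \<cdot> y \<cdot> x" by (simp add: x y w xy)
  also have "\<dots> = x \<cdot> y \<cdot> w \<cdot> x \<cdot> y \<cdot> x" using idem4[of w x y x] by (simp add: x y w)
  also have "\<dots> = x \<cdot> y \<cdot> w \<cdot> x \<cdot> y \<cdot> w \<cdot> y \<cdot> x" by (simp add: x y w hy)
  also have "\<dots> = x \<cdot> y \<cdot> w \<cdot> y \<cdot> x" using idem3_left[of x y w "y \<cdot> x"] by (simp add: x y w)
  also have "\<dots> = x \<cdot> y \<cdot> x" by (simp add: x y w hy)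
  finally show ?thesis using xy by simp
qed

lemma sandwich_mult_right:
  assumes x: "x \<in> S" and y: "y \<in> S" and z: "z \<in> S" and xy: "x \<cdot> y \<cdot> x = x"
  shows "x \<cdot> z \<cdot> y \<cdot> z \<cdot> x \<cdot> z = x \<cdot> z"
proof -
  have hx: "x \<cdot> y \<cdot> x \<cdot> r = x \<cdot> r" if "r \<in> S" for r using sandwich_left[OF x y that xy] .
  have "x \<cdot> z \<cdot> y \<cdot> z \<cdot> x \<cdot> z = x \<cdot> z \<cdot> y \<cdot> z \<cdot> x \<cdot> y \<cdot> x \<cdot> z" by (simp add: x y z hx)
  also have "\<dots> = x \<cdot> z \<cdot> y \<cdot> z \<cdot> x \<cdot> y \<cdot> x \<cdot> z \<cdot> y \<cdot> x \<cdot> z"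
    using idem3[of y x z] by (simp add: x y z)
  also have "\<dots> = x \<cdot> z \<cdot> y \<cdot> z \<cdot> x \<cdot> z \<cdot> y \<cdot> x \<cdot> z" by (simp add: x y z hx)
  also have "\<dots> = x \<cdot> z \<cdot> x \<cdot> z \<cdot> y \<cdot> z \<cdot> x \<cdot> z \<cdot> y \<cdot> x \<cdot> z"
    using idem2_left[of x z "y \<cdot> z \<cdot> x \<cdot> z \<cdot> y \<cdot> x \<cdot> z"] by (simp add: x y z)
  also have "\<dots> = x \<cdot> z \<cdot> x \<cdot> z \<cdot> y \<cdot> x \<cdot> z"
    using idem4_left[of z x z y "x \<cdot> z"] by (simp add: x y z)
  also have "\<dots> = x \<cdot> z \<cdot> y \<cdot> x \<cdot> z" using idem2_left[of x z "y \<cdot> x \<cdot> z"] by (simp add: x y z)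
  also have "\<dots> = x \<cdot> y \<cdot> x \<cdot> z \<cdot> y \<cdot> x \<cdot> z" by (simp add: x y z hx)
  also have "\<dots> = x \<cdot> y \<cdot> x \<cdot> z" using idem3[of y x z] by (simp add: x y z)
  also have "\<dots> = x \<cdot> z" by (simp add: x y z hx)
  finally show ?thesis .
qed

lemma Drel_iff: "(x, y) \<in> Drel S f \<longleftrightarrow> x \<in> S \<and> y \<in> S \<and> x \<cdot> y \<cdot> x = x \<and> y \<cdot> x \<cdot> y = y"
  unfolding Drel_def by auto

lemma equiv_Drel: "equiv S (Drel S f)"
proof (rule equivI)
  show "Drel S f \<subseteq> S \<times> S" unfolding Drel_def by auto
  show "refl_on S (Drel S f)" unfolding refl_on_def Drel_iff by simp
  show "sym (Drel S f)" unfolding sym_def Drel_iff by auto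
  show "trans (Drel S f)" unfolding trans_def Drel_iff by (meson sandwich_trans)
qed

lemma Drel_mult_right: "(x, y) \<in> Drel S f \<Longrightarrow> z \<in> S \<Longrightarrow> (x \<cdot> z, y \<cdot> z) \<in> Drel S f"
  unfolding Drel_iff using sandwich_mult_right by auto

lemma Drel_commute: "x \<in> S \<Longrightarrow> y \<in> S \<Longrightarrow> (x \<cdot> y, y \<cdot> x) \<in> Drel S f"
  using Drel_iff idem2 by simp

end

lemma band_flip: "band S f \<Longrightarrow> band S (\<lambda>x y. f y x)"
  unfolding band_def by auto

context band
begin

lemma Drel_flip: "Drel S (\<lambda>x y. y \<cdot> x) = Drel S f"
  unfolding Drel_def by auto

lemma Drel_mult_left:
  assumes "(x, y) \<in> Drel S f" and "z \<in> S"
  shows "(z \<cdot> x, z \<cdot> y) \<in> Drel S f"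
proof -
  interpret flipped: band S "\<lambda>x y. f y x" by (rule band_flip[OF band_axioms])
  show ?thesis using flipped.Drel_mult_right[of x y z] assms Drel_flip by simp
qed

lemma Drel_congruence:
  assumes "(x, x') \<in> Drel S f" and "(y, y') \<in> Drel S f"
  shows "(x \<cdot> y, x' \<cdot> y') \<in> Drel S f"
proof -
  have "x' \<in> S" "y \<in> S" using assms by (auto simp: Drel_iff)
  then have "(x \<cdot> y, x' \<cdot> y) \<in> Drel S f" "(x' \<cdot> y, x' \<cdot> y') \<in> Drel S f"
    using assms Drel_mult_right Drel_mult_left by auto
  then show ?thesis using equiv_Drel unfolding equiv_def trans_def by blast
qed

end

lemma quot_op_class:
  assumes "equiv S (Drel S m)"
    and compat: "\<And>x x' y y'. (x, x') \<in> Drel S m \<Longrightarrow> (y, y') \<in> Drel S m \<Longrightarrow>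
      (g x y, g x' y') \<in> Drel S m"
    and "x \<in> S" "y \<in> S"
  shows "quot_op S m g (Drel S m `` {x}) (Drel S m `` {y}) = Drel S m `` {g x y}"
proof -
  let ?D = "Drel S m"
  have "x \<in> ?D `` {x}" "y \<in> ?D `` {y}" using assms equiv_class_self by fastforce+
  then have "(SOME a. a \<in> ?D `` {x}) \<in> ?D `` {x}" "(SOME b. b \<in> ?D `` {y}) \<in> ?D `` {y}"
    by (meson someI)+
  then have "(g x y, g (SOME a. a \<in> ?D `` {x}) (SOME b. b \<in> ?D `` {y})) \<in> ?D"
    using compat by blast
  then show ?thesis
    unfolding quot_op_def using assms(1) by (metis equiv_class_eq)
qed

lemma Ball_quotient: "(\<forall>A \<in> S // R. P A) \<longleftrightarrow> (\<forall>x \<in> S. P (R `` {x}))"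
  by (auto simp: quotient_def)

lemma distributive_lattice_if_meet_distrib:
  assumes sk: "skew_lattice L m j"
    and comm: "\<And>x y. x \<in> L \<Longrightarrow> y \<in> L \<Longrightarrow> m x y = m y x \<and> j x y = j y x"
    and distrib: "\<And>x y z. x \<in> L \<Longrightarrow> y \<in> L \<Longrightarrow> z \<in> L \<Longrightarrow> m x (j y z) = j (m x y) (m x z)"
  shows "distributive_lattice L m j"
proof -
  have join_distrib: "j x (m y z) = m (j x y) (j x z)" if "x \<in> L" "y \<in> L" "z \<in> L" for x y z
  proof -
    have closed: "\<And>a b. a \<in> L \<Longrightarrow> b \<in> L \<Longrightarrow> m a b \<in> L \<and> j a b \<in> L"
      and join_assoc: "\<And>a b c. a \<in> L \<Longrightarrow> b \<in> L \<Longrightarrow> c \<in> L \<Longrightarrow> j (j a b) c = j a (j b c)"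
      and absorb: "\<And>a b. a \<in> L \<Longrightarrow> b \<in> L \<Longrightarrow> m a (j a b) = a \<and> j a (m a b) = a"
      using sk unfolding skew_lattice_def by blast+
    have "m (j x y) (j x z) = j (m (j x y) x) (m (j x y) z)"
      using distrib closed that by blast
    also have "m (j x y) x = x"
      using comm absorb closed that by metis
    also have "m (j x y) z = j (m z x) (m z y)"
      using comm distrib closed that by metis
    also have "j x (j (m z x) (m z y)) = j (j x (m x z)) (m z y)"
      using join_assoc comm closed that by metis
    also have "j x (m x z) = x"
      using absorb that by blast
    finally show ?thesis
      using comm that by metis
  qed
  show ?thesis
    unfolding distributive_lattice_def using sk comm distrib join_distrib by blast
qed

lemma YB_solution_meet_join_iff:
  "YB_solution X (\<lambda>(x, y). (m x y, j x y)) \<longleftrightarrow>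
     (\<forall>x \<in> X. \<forall>y \<in> X. m x y \<in> X \<and> j x y \<in> X) \<and>
     (\<forall>x \<in> X. \<forall>y \<in> X. \<forall>z \<in> X.
        m (m x y) (m (j x y) z) = m x (m y z) \<and>
        j (m x y) (m (j x y) z) = m (j x (m y z)) (j y z) \<and>
        j (j x y) z = j (j x (m y z)) (j y z))"
  unfolding YB_solution_def r12_def r23_def by auto

locale skew_lat =
  fixes S :: "'a set" and m j :: "'a \<Rightarrow> 'a \<Rightarrow> 'a"
  assumes skew_lattice: "skew_lattice S m j"
begin

lemma meet_closed[simp]: "x \<in> S \<Longrightarrow> y \<in> S \<Longrightarrow> m x y \<in> S"
  and join_closed[simp]: "x \<in> S \<Longrightarrow> y \<in> S \<Longrightarrow> j x y \<in> S"
  and meet_join_absorb: "x \<in> S \<Longrightarrow> y \<in> S \<Longrightarrow> m x (j x y) = x"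
  and join_meet_absorb: "x \<in> S \<Longrightarrow> y \<in> S \<Longrightarrow> j x (m x y) = x"
  and join_meet_absorb': "x \<in> S \<Longrightarrow> y \<in> S \<Longrightarrow> j (m x y) y = y"
  and meet_join_absorb': "x \<in> S \<Longrightarrow> y \<in> S \<Longrightarrow> m (j x y) y = y"
  using skew_lattice unfolding skew_lattice_def by blast+

sublocale meet: band S m
  using skew_lattice unfolding skew_lattice_def band_def by blast

sublocale join: band S j
  using skew_lattice unfolding skew_lattice_def band_def by blast

lemma join_sandwich_if_meet_sandwich:
  assumes x: "x \<in> S" and y: "y \<in> S" and yxy: "m y (m x y) = y"
  shows "j x (j y x) = x"
proof -
  have "j y (m x y) = m x y" using join_meet_absorb'[of y "m x y"] yxy x y by simp
  then have x_eq: "j x (j y (m x y)) = x" using join_meet_absorb[of x y] x y by simp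
  have "j x (j y x) = j x (j y (j x (j y (m x y))))" using x_eq by simp
  also have "\<dots> = j x (j y (m x y))" using join.idem2_left[of x y "m x y"] x y by simp
  finally show ?thesis using x_eq by simp
qed

end

lemma skew_lat_dual: "skew_lat S m j \<Longrightarrow> skew_lat S j m"
  unfolding skew_lat_def skew_lattice_def by blast

context skew_lat
begin

lemma Drel_meet_subset_join: "Drel S m \<subseteq> Drel S j"
proof (rule subrelI)
  fix x y assume "(x, y) \<in> Drel S m"
  then show "(x, y) \<in> Drel S j"
    using join_sandwich_if_meet_sandwich[of x y] join_sandwich_if_meet_sandwich[of y x]
    unfolding meet.Drel_iff join.Drel_iff by simp
qed

lemma Drel_join_eq_meet: "Drel S j = Drel S m"
proof -
  interpret dual: skew_lat S j m by (rule skew_lat_dual[OF skew_lat_axioms])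
  show ?thesis using Drel_meet_subset_join dual.Drel_meet_subset_join by blast
qed

abbreviation D :: "('a \<times> 'a) set" where "D \<equiv> Drel S m"

lemma quot_meet_class[simp]:
  "x \<in> S \<Longrightarrow> y \<in> S \<Longrightarrow> quot_op S m m (D `` {x}) (D `` {y}) = D `` {m x y}"
  using quot_op_class[OF meet.equiv_Drel meet.Drel_congruence] .

lemma quot_join_class[simp]:
  "x \<in> S \<Longrightarrow> y \<in> S \<Longrightarrow> quot_op S m j (D `` {x}) (D `` {y}) = D `` {j x y}"
  using quot_op_class[OF meet.equiv_Drel join.Drel_congruence[unfolded Drel_join_eq_meet]] .

lemma class_in_quotient[simp]: "x \<in> S \<Longrightarrow> D `` {x} \<in> S // D"
  by (rule quotientI)

lemma meet_class_commute: "x \<in> S \<Longrightarrow> y \<in> S \<Longrightarrow> D `` {m x y} = D `` {m y x}"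
  using eq_equiv_class_iff[OF meet.equiv_Drel] meet.Drel_commute by simp

lemma join_class_commute: "x \<in> S \<Longrightarrow> y \<in> S \<Longrightarrow> D `` {j x y} = D `` {j y x}"
  using eq_equiv_class_iff[OF meet.equiv_Drel] join.Drel_commute Drel_join_eq_meet by simp

lemma skew_lattice_quotient: "skew_lattice (S // D) (quot_op S m m) (quot_op S m j)"
  unfolding skew_lattice_def Ball_quotient
  using meet_join_absorb join_meet_absorb join_meet_absorb' meet_join_absorb' by simp

lemma quotient_commute:
  "A \<in> S // D \<Longrightarrow> B \<in> S // D \<Longrightarrow>
     quot_op S m m A B = quot_op S m m B A \<and> quot_op S m j A B = quot_op S m j B A"
  using meet_class_commute join_class_commute by (auto elim!: quotientE)

end

locale strong_distributive = skew_lat +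
  assumes YB: "YB_solution S (\<lambda>(x, y). (m x y, j x y))"
begin

lemma YB_identities:
  assumes "x \<in> S" "y \<in> S" "z \<in> S"
  shows "m (m x y) (m (j x y) z) = m x (m y z)"
    and "j (m x y) (m (j x y) z) = m (j x (m y z)) (j y z)"
    and "j (j x y) z = j (j x (m y z)) (j y z)"
  using YB assms unfolding YB_solution_meet_join_iff by blast+

lemma meet_join_cancel: "a \<in> S \<Longrightarrow> u \<in> S \<Longrightarrow> w \<in> S \<Longrightarrow> m a (m (j a u) w) = m a w"
  using meet.assoc[of a "j a u" w] meet_join_absorb[of a u] by simp

text \<open>The middle Yang--Baxter identity at \<open>(a, a\<and>b, c)\<close>.\<close>

lemma join_meet_left:
  assumes a: "a \<in> S" and b: "b \<in> S" and c: "c \<in> S"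
  shows "j (m a b) (m a c) = m a (j (m a b) c)"
proof -
  have "j (m a (m a b)) (m (j a (m a b)) c) = m (j a (m (m a b) c)) (j (m a b) c)"
    using YB_identities(2)[of a "m a b" c] a b c by simp
  moreover have "j a (m a b) = a" "j a (m (m a b) c) = a"
    using join_meet_absorb[of a b] join_meet_absorb[of a "m b c"] a b c by simp_all
  ultimately show ?thesis using a b by simp
qed

lemma meet_distrib_join:
  assumes x: "x \<in> S" and y: "y \<in> S" and z: "z \<in> S"
  shows "m x (j y z) = j (m x y) (m x z)"
proof -
  have "j (m x y) (m x z) = j (m x y) (m x (m (j x y) z))"
    using meet_join_cancel[of x y z] x y z by simp
  also have "\<dots> = m x (j (m x y) (m (j x y) z))"
    using join_meet_left[of x y "m (j x y) z"] x y z by simp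
  also have "\<dots> = m x (m (j x (m y z)) (j y z))"
    using YB_identities(2)[of x y z] x y z by simp
  also have "\<dots> = m x (j y z)"
    using meet_join_cancel[of x "m y z" "j y z"] x y z by simp
  finally show ?thesis by simp
qed

lemma YB_solution_quotient:
  "YB_solution (S // D) (\<lambda>(x, y). (quot_op S m m x y, quot_op S m j x y))"
  unfolding YB_solution_meet_join_iff Ball_quotient
proof (intro conjI ballI)
  fix x y z assume xyz: "x \<in> S" "y \<in> S" "z \<in> S"
  then show "quot_op S m m (D `` {x}) (D `` {y}) \<in> S // D"
    and "quot_op S m j (D `` {x}) (D `` {y}) \<in> S // D" by simp_all
  from xyz show
    "quot_op S m m (quot_op S m m (D `` {x}) (D `` {y}))
       (quot_op S m m (quot_op S m j (D `` {x}) (D `` {y})) (D `` {z})) =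
     quot_op S m m (D `` {x}) (quot_op S m m (D `` {y}) (D `` {z}))"
    and
    "quot_op S m j (quot_op S m m (D `` {x}) (D `` {y}))
       (quot_op S m m (quot_op S m j (D `` {x}) (D `` {y})) (D `` {z})) =
     quot_op S m m (quot_op S m j (D `` {x}) (quot_op S m m (D `` {y}) (D `` {z})))
       (quot_op S m j (D `` {y}) (D `` {z}))"
    and
    "quot_op S m j (quot_op S m j (D `` {x}) (D `` {y})) (D `` {z}) =
     quot_op S m j (quot_op S m j (D `` {x}) (quot_op S m m (D `` {y}) (D `` {z})))
       (quot_op S m j (D `` {y}) (D `` {z}))"
    by (simp_all del: meet.assoc join.assoc add: YB_identities[OF xyz])
qed

lemma distributive_lattice_quotient: "distributive_lattice (S // D) (quot_op S m m) (quot_op S m j)"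
proof (rule distributive_lattice_if_meet_distrib)
  show "skew_lattice (S // D) (quot_op S m m) (quot_op S m j)" by (rule skew_lattice_quotient)
  show "quot_op S m m A B = quot_op S m m B A \<and> quot_op S m j A B = quot_op S m j B A"
    if "A \<in> S // D" "B \<in> S // D" for A B
    using quotient_commute that .
  show "quot_op S m m A (quot_op S m j B C) =
      quot_op S m j (quot_op S m m A B) (quot_op S m m A C)"
    if "A \<in> S // D" "B \<in> S // D" "C \<in> S // D" for A B C
    using that meet_distrib_join by (auto elim!: quotientE)
qed

end

theorem mainTheorem5:
  fixes S :: "'a set" and m j :: "'a \<Rightarrow> 'a \<Rightarrow> 'a"
  assumes "strong_distributive_solution S m j"
  shows "strong_distributive_solution (S // Drel S m) (quot_op S m m) (quot_op S m j)
       \<and> distributive_lattice (S // Drel S m) (quot_op S m m) (quot_op S m j)"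
proof -
  interpret strong_distributive S m j
    using assms unfolding strong_distributive_solution_def strong_distributive_def
      strong_distributive_axioms_def skew_lat_def by blast
  show ?thesis
    unfolding strong_distributive_solution_def
    using skew_lattice_quotient YB_solution_quotient distributive_lattice_quotient by blast
qed

end
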